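(* Assume Dickson's conjecture. Then there exist infinitely many primes $q$ such that $2q+1$, $6q+1$ and $8q+1$ are all prime, while $iq+1$ is not prime for each $i\in\{10,12,14,16,18\}$.
   Context: Dickson's conjecture: Let $a_1,\dots,a_k$ be integers and $b_1,\dots,b_k$ positive integers. If there is no prime $q$ such that $q$ divides $\prod_{i=1}^k(a_i+b_in)$ for every $n\in\{0,1,\dots,q-1\}$, then there are infinitely many positive integers $n$ for which $a_1+b_1n,\dots,a_k+b_kn$ are all prime. *)

theory Defs
  imports "HOL-Computational_Algebra.Primes"
begin

definition dickson_conjecture :: bool where
  "dickson_conjecture \<longleftrightarrow>
    (\<forall>(k::nat) (a::nat \<Rightarrow> int) (b::nat \<Rightarrow> int).
       (\<forall>i<k. b i > 0) \<longrightarrow>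
       \<not> (\<exists>q::int. prime q \<and> (\<forall>n\<in>{0..q-1}. q dvd (\<Prod>i<k. a i + b i * n))) \<longrightarrow>
       infinite {n::int. n > 0 \<and> (\<forall>i<k. prime (a i + b i * n))})"

end

theory Submission
  imports Defs
begin

text \<open>Apply Dickson's conjecture to the four forms q, 2q+1, 6q+1, 8q+1 with q = 131 + 1365n.
  Since 1365 = 3 * 5 * 7 * 13 and q is 2 mod 3, 1 mod 5, 5 mod 7 and 1 mod 13, the numbers
  10q+1 and 16q+1 are divisible by 3, 14q+1 by 5, 18q+1 by 7 and 12q+1 by 13.
  The forms are admissible: modulo a prime p, a form whose slope p divides never vanishes
  (offset and slope are coprime), and any other form vanishes for at most one residue, so the
  product of the forms has fewer than p roots as soon as fewer than p slopes are prime to p.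
  This holds for p = 2 and p = 3 because 3 divides every slope and 2 all but one.\<close>

lemma card_linear_roots_le_1:
  fixes p a b :: int
  assumes p: "prime p" and b: "\<not> p dvd b"
  shows "card {n\<in>{0..p-1}. p dvd a + b*n} \<le> 1"
proof -
  have "x = y" if x: "x \<in> {n\<in>{0..p-1}. p dvd a + b*n}" and y: "y \<in> {n\<in>{0..p-1}. p dvd a + b*n}"
    for x y
  proof -
    from x y have "p dvd (a + b*x) - (a + b*y)" by (blast intro: dvd_diff)
    then have "p dvd b * (x - y)" by (simp add: algebra_simps)
    with p b have "p dvd x - y" by (simp add: prime_dvd_mult_iff)
    moreover have "\<bar>x - y\<bar> < p" using x y by auto
    ultimately show "x = y" using dvd_imp_le_int[of "x - y" p] by force
  qed
  moreover have "finite {n\<in>{0..p-1}. p dvd a + b*n}" by (rule finite_subset[of _ "{0..p-1}"]) auto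
  ultimately show ?thesis by (simp add: card_le_Suc0_iff_eq)
qed

lemma not_dvd_linear_if_dvd_slope:
  fixes p a b n :: int
  assumes "prime p" and "coprime a b" and "p dvd b"
  shows "\<not> p dvd a + b*n"
proof
  assume "p dvd a + b*n"
  with \<open>p dvd b\<close> have "p dvd a" by (simp add: dvd_add_left_iff)
  with assms show False by (meson coprime_common_divisor not_prime_unit)
qed

lemma exists_non_root_prod_linear:
  fixes p :: int and a b :: "nat \<Rightarrow> int"
  assumes p: "prime p" and coprime: "\<forall>i<k. coprime (a i) (b i)"
    and few: "int (card {i. i < k \<and> \<not> p dvd b i}) < p"
  shows "\<exists>n\<in>{0..p-1}. \<not> p dvd (\<Prod>i<k. a i + b i * n)"
proof -
  define I where "I = {i. i < k \<and> \<not> p dvd b i}"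
  define R where "R i = {n\<in>{0..p-1}. p dvd a i + b i * n}" for i
  have "p dvd (\<Prod>i<k. a i + b i * n) \<longleftrightarrow> (\<exists>i\<in>I. n \<in> R i)" if "n \<in> {0..p-1}" for n
    using that p coprime not_dvd_linear_if_dvd_slope
    by (auto simp: I_def R_def prime_dvd_prod_iff)
  then have roots: "{n\<in>{0..p-1}. p dvd (\<Prod>i<k. a i + b i * n)} = (\<Union>i\<in>I. R i)"
    by (auto simp: R_def)
  have "card (\<Union>i\<in>I. R i) \<le> (\<Sum>i\<in>I. card (R i))"
    by (rule card_UN_le) (simp add: I_def)
  also have "\<dots> \<le> (\<Sum>i\<in>I. 1)"
    by (rule sum_mono) (use card_linear_roots_le_1[OF p] in \<open>simp add: I_def R_def\<close>)
  finally have "int (card (\<Union>i\<in>I. R i)) < int (card {0..p-1})"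
    using few p by (simp add: I_def prime_gt_0_int)
  then have "(\<Union>i\<in>I. R i) \<noteq> {0..p-1}" by auto
  moreover have "(\<Union>i\<in>I. R i) \<subseteq> {0..p-1}" by (auto simp: R_def)
  ultimately show ?thesis using roots by blast
qed

lemma dickson_conjecture_coprime_forms:
  fixes a b :: "nat \<Rightarrow> int"
  assumes "dickson_conjecture" and "\<forall>i<k. b i > 0" and "\<forall>i<k. coprime (a i) (b i)"
    and "\<forall>p. prime p \<longrightarrow> int (card {i. i < k \<and> \<not> p dvd b i}) < p"
  shows "infinite {n::int. n > 0 \<and> (\<forall>i<k. prime (a i + b i * n))}"
  using assms exists_non_root_prod_linear unfolding dickson_conjecture_def by blast

lemma less_4_iff: "(i::nat) < 4 \<longleftrightarrow> i = 0 \<or> i = 1 \<or> i = 2 \<or> i = 3"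
  by auto

definition form_offset :: "nat \<Rightarrow> int" where
  "form_offset i = [131, 263, 787, 1049] ! i"

definition form_slope :: "nat \<Rightarrow> int" where
  "form_slope i = [1365, 2730, 8190, 10920] ! i"

lemma form_slope_pos: "i < 4 \<Longrightarrow> form_slope i > 0"
  by (auto simp: form_slope_def less_4_iff)

lemma form_offset_coprime_slope: "i < 4 \<Longrightarrow> coprime (form_offset i) (form_slope i)"
  by (auto simp: form_offset_def form_slope_def less_4_iff
      coprime_iff_gcd_eq_1 gcd_non_0_int)

lemma card_form_slopes_not_dvd:
  fixes p :: int
  assumes "prime p"
  shows "int (card {i. i < 4 \<and> \<not> p dvd form_slope i}) < p"
proof -
  have p2: "p \<ge> 2" using assms by (rule prime_ge_2_int)
  moreover have "p \<noteq> 4" using assms prime_odd_int[OF assms] by auto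
  ultimately consider "p = 2" | "p = 3" | "p \<ge> 5" by linarith
  then show ?thesis
  proof cases
    case 1
    then have "{i. i < 4 \<and> \<not> p dvd form_slope i} = {0}"
      by (auto simp: form_slope_def less_4_iff)
    then show ?thesis using 1 by simp
  next
    case 2
    then have "\<forall>i<4. p dvd form_slope i" by (simp add: form_slope_def less_4_iff)
    then have "{i. i < 4 \<and> \<not> p dvd form_slope i} = {}" by auto
    then show ?thesis using p2 by (simp only: card.empty)
  next
    case 3
    have "card {i. i < 4 \<and> \<not> p dvd form_slope i} \<le> card {..<4::nat}"
      by (rule card_mono) auto
    then show ?thesis using 3 by simp
  qed
qed

lemma not_prime_mult:
  fixes a b :: nat
  assumes "1 < a" and "1 < b"
  shows "\<not> prime (a*b)"
  using prime_product[of a b] assms by auto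

lemma not_prime_shifts:
  fixes q m :: nat
  assumes q: "q = 131 + 1365*m"
  shows "\<forall>i\<in>{10,12,14,16,18::nat}. \<not> prime (i*q+1)"
proof -
  have "\<not> prime (3*(437+4550*m))" "\<not> prime (13*(121+1260*m))" "\<not> prime (5*(367+3822*m))"
    "\<not> prime (3*(699+7280*m))" "\<not> prime (7*(337+3510*m))"
    by (rule not_prime_mult; simp)+
  then show ?thesis using q by simp
qed

lemma all_forms_prime_iff:
  fixes q m :: nat
  assumes "q = 131 + 1365*m"
  shows "(\<forall>i<4. prime (form_offset i + form_slope i * int m))
    \<longleftrightarrow> prime q \<and> prime (2*q+1) \<and> prime (6*q+1) \<and> prime (8*q+1)"
proof -
  have "(\<forall>i<4. prime (form_offset i + form_slope i * int m)) \<longleftrightarrow>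
      prime (int q) \<and> prime (int (2*q+1)) \<and> prime (int (6*q+1)) \<and> prime (int (8*q+1))"
    by (simp add: assms form_offset_def form_slope_def less_4_iff all_conj_distrib)
  then show ?thesis by (simp only: prime_nat_int_transfer)
qed

theorem lemma6p1:
  assumes "dickson_conjecture"
  shows "infinite {q::nat. prime q \<and> prime (2*q+1) \<and> prime (6*q+1) \<and> prime (8*q+1)
                    \<and> (\<forall>i\<in>{10,12,14,16,18::nat}. \<not> prime (i*q+1))}"
    (is "infinite ?T")
proof -
  define M where "M = {m::nat. m > 0 \<and> (\<forall>i<4. prime (form_offset i + form_slope i * int m))}"
  have "infinite {n::int. n > 0 \<and> (\<forall>i<4. prime (form_offset i + form_slope i * n))}"
    (is "infinite ?N")
    using dickson_conjecture_coprime_forms[OF assms] form_slope_pos form_offset_coprime_slope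
      card_form_slopes_not_dvd by blast
  moreover have "?N \<subseteq> int ` M"
  proof
    fix n assume "n \<in> ?N"
    then have "nat n \<in> M" and "n = int (nat n)" by (auto simp: M_def)
    then show "n \<in> int ` M" by (rule rev_image_eqI)
  qed
  ultimately have "infinite M" using finite_imageI infinite_super by blast
  then have "infinite ((\<lambda>m. 131 + 1365*m) ` M)" by (simp add: finite_image_iff inj_on_def)
  moreover have "(\<lambda>m. 131 + 1365*m) ` M \<subseteq> ?T"
  proof (rule image_subsetI)
    fix m assume "m \<in> M"
    then show "131 + 1365*m \<in> ?T"
      using all_forms_prime_iff[OF refl] not_prime_shifts[OF refl] by (simp add: M_def)
  qed
  ultimately show ?thesis by (rule infinite_super[rotated])
qed

end
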